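(* Let $s=(\ell,\nu)\in S$, let $(\ell,\zeta)$ be a region with $(\ell,[\nu])\to_*(\ell,\zeta)$, let $a\in\mathit{Act}$, and let $F:\hat S\to\mathbb{R}$ be regionally quasi-simple. Then the function $F^\oplus_{s,\zeta,a}:I\to\mathbb{R}$, where $I=\{t\in\mathbb{R}_{\ge0}:\nu+t\in\zeta\}$, defined by $$F^\oplus_{s,\zeta,a}(t)=t+\sum_{(C,\ell')\in 2^{\mathcal{C}}\times L}\delta[\ell,a](C,\ell')\cdot F\big((\ell',(\nu+t)[C:=0]),(\ell',\zeta[C:=0])\big),$$ is continuous and nondecreasing.
   Context: Fix $k\in\mathbb{N}$ and a finite set of clocks $\mathcal{C}$; $V$ is the set of $\nu:\mathcal{C}\to[0,k]$; $\nu+t$ adds $t$ to every clock; $\nu[C:=0]$ resets the clocks in $C\subseteq\mathcal{C}$; $\|x\|_\infty=\max_i|x_i|$; $\overline{X}$ is the closure of $X$. A clock region is a maximal set of valuations satisfying exactly the same constraints $c\bowtie i$, $c-c'\bowtie i$ ($c,c'\in\mathcal{C}$, $i\in\{0,\dots,k\}$, $\bowtie\in\{<,>,=,\le,\ge\}$); $[\nu]$ is the region of $\nu$; $\zeta[C:=0]=[\nu[C:=0]]$ for $\nu\in\zeta$. Clock zones are convex unions of clock regions. A PTA is $\mathsf{T}=(L,L_F,\mathcal{C},\mathit{Inv},\mathit{Act},E,\delta)$ with finite locations $L$, final locations $L_F$, invariants $\mathit{Inv}:L\to$ clock zones, finite actions $\mathit{Act}$, enabledness $E:L\times\mathit{Act}\to$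 clock zones and $\delta:L\times\mathit{Act}\to\mathrm{Dist}(2^{\mathcal{C}}\times L)$. Its states are $S=\{(\ell,\nu):\nu\in\mathit{Inv}(\ell)\}$. A region is $(\ell,\zeta)$ with $\zeta\subseteq\mathit{Inv}(\ell)$ a clock region; $R\to_*R'$ iff some $(\ell,\nu)\in R$ and $t\ge0$ satisfy $(\ell,\nu+t)\in R'$. The boundary-region-graph state space is $\hat S=\{((\ell,\nu),(\ell,\zeta)):(\ell,\zeta)\text{ a region},\ \nu\in\overline{\zeta}\}$. For $\nu,\nu'\in V$, $\nu\unlhd\nu'$ iff there is $t\ge0$ such that for every clock $c$, $\nu'(c)-\nu(c)=t$ or $\nu'(c)=\nu(c)$, with $\nu'(c)-\nu(c)=t$ for at least one $c$; then $\nu'-\nu:=t$. $f:X\to\mathbb{R}$ is quasi-simple if it is Lipschitz w.r.t. $\|\cdot\|_\infty$ and whenever $\nu\unlhd\nu'$ in $X$, $f(\nu)\ge f(\nu')$ and $f(\nu)-f(\nu')\le\nu'-\nu$. $F:\hat S\to\mathbb{R}$ is regionally quasi-simple if for every region $(\ell,\zeta)$, $\nu\mapsto F((\ell,\nu),(\ell,\zeta))$ on $\overline{\zeta}$ is quasi-simple. *)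

theory Defs
  imports "HOL-Analysis.Analysis" "HOL-Probability.Probability_Mass_Function"
begin

text \<open>Clocks are the elements of a finite type 'c (the whole set of clocks is UNIV).
  A valuation is a function 'c \<Rightarrow> real.  The bound k is a natural number.\<close>

type_synonym 'c valuation = "'c \<Rightarrow> real"

definition Vals :: "nat \<Rightarrow> 'c valuation set" where
  "Vals k = {\<nu>. \<forall>c. 0 \<le> \<nu> c \<and> \<nu> c \<le> real k}"

definition delay :: "'c valuation \<Rightarrow> real \<Rightarrow> 'c valuation" where
  "delay \<nu> t = (\<lambda>c. \<nu> c + t)"

definition reset :: "'c valuation \<Rightarrow> 'c set \<Rightarrow> 'c valuation" where
  "reset \<nu> C = (\<lambda>c. if c \<in> C then 0 else \<nu> c)"

definition norm_inf :: "('c::finite) valuation \<Rightarrow> real" where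
  "norm_inf x = Max (range (\<lambda>c. \<bar>x c\<bar>))"

datatype cmp = Lt | Le | Eq | Ge | Gt

fun cmp_sem :: "cmp \<Rightarrow> real \<Rightarrow> real \<Rightarrow> bool" where
  "cmp_sem Lt x y = (x < y)"
| "cmp_sem Le x y = (x \<le> y)"
| "cmp_sem Eq x y = (x = y)"
| "cmp_sem Ge x y = (x \<ge> y)"
| "cmp_sem Gt x y = (x > y)"

datatype 'c constr = Single 'c cmp nat | Diff 'c 'c cmp nat

fun sat :: "'c valuation \<Rightarrow> 'c constr \<Rightarrow> bool" where
  "sat \<nu> (Single c r i) = cmp_sem r (\<nu> c) (real i)"
| "sat \<nu> (Diff c c' r i) = cmp_sem r (\<nu> c - \<nu> c') (real i)"

fun bound :: "'c constr \<Rightarrow> nat" where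
  "bound (Single c r i) = i"
| "bound (Diff c c' r i) = i"

definition constrs :: "nat \<Rightarrow> 'c constr set" where
  "constrs k = {\<phi>. bound \<phi> \<le> k}"

definition region_of :: "nat \<Rightarrow> 'c valuation \<Rightarrow> 'c valuation set" where
  "region_of k \<nu> = {\<nu>' \<in> Vals k. \<forall>\<phi> \<in> constrs k. sat \<nu> \<phi> = sat \<nu>' \<phi>}"

definition clock_region :: "nat \<Rightarrow> 'c valuation set \<Rightarrow> bool" where
  "clock_region k \<zeta> \<longleftrightarrow> (\<exists>\<nu> \<in> Vals k. \<zeta> = region_of k \<nu>)"

definition reset_region :: "nat \<Rightarrow> 'c valuation set \<Rightarrow> 'c set \<Rightarrow> 'c valuation set" where
  "reset_region k \<zeta> C = region_of k (reset (SOME \<nu>. \<nu> \<in> \<zeta>) C)"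

definition clock_zone :: "nat \<Rightarrow> 'c valuation set \<Rightarrow> bool" where
  "clock_zone k Z \<longleftrightarrow>
     (\<exists>\<R>. (\<forall>\<zeta> \<in> \<R>. clock_region k \<zeta>) \<and> Z = \<Union>\<R>) \<and>
     (\<forall>x \<in> Z. \<forall>y \<in> Z. \<forall>u::real. 0 \<le> u \<and> u \<le> 1 \<longrightarrow>
        (\<lambda>c. u * x c + (1 - u) * y c) \<in> Z)"

definition pta :: "nat \<Rightarrow> 'l set \<Rightarrow> 'l set \<Rightarrow> ('l \<Rightarrow> ('c::finite) valuation set) \<Rightarrow> 'a set
    \<Rightarrow> ('l \<Rightarrow> 'a \<Rightarrow> 'c valuation set) \<Rightarrow> ('l \<Rightarrow> 'a \<Rightarrow> ('c set \<times> 'l) pmf) \<Rightarrow> bool" where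
  "pta k L LF Inv Act E \<delta> \<longleftrightarrow>
     finite L \<and> LF \<subseteq> L \<and> finite Act \<and>
     (\<forall>l \<in> L. clock_zone k (Inv l)) \<and>
     (\<forall>l \<in> L. \<forall>a \<in> Act. clock_zone k (E l a)) \<and>
     (\<forall>l \<in> L. \<forall>a \<in> Act. set_pmf (\<delta> l a) \<subseteq> Pow UNIV \<times> L)"

definition states :: "'l set \<Rightarrow> ('l \<Rightarrow> 'c valuation set) \<Rightarrow> ('l \<times> 'c valuation) set" where
  "states L Inv = {(l, \<nu>). l \<in> L \<and> \<nu> \<in> Inv l}"

definition is_region :: "nat \<Rightarrow> 'l set \<Rightarrow> ('l \<Rightarrow> 'c valuation set) \<Rightarrow> 'l \<Rightarrow> 'c valuation set \<Rightarrow> bool" where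
  "is_region k L Inv l \<zeta> \<longleftrightarrow> l \<in> L \<and> clock_region k \<zeta> \<and> \<zeta> \<subseteq> Inv l"

definition reaches :: "('l \<times> 'c valuation set) \<Rightarrow> ('l \<times> 'c valuation set) \<Rightarrow> bool" where
  "reaches R R' \<longleftrightarrow> (\<exists>\<nu> \<in> snd R. \<exists>t \<ge> 0. fst R' = fst R \<and> delay \<nu> t \<in> snd R')"

definition succ_by :: "'c valuation \<Rightarrow> 'c valuation \<Rightarrow> real \<Rightarrow> bool" where
  "succ_by \<nu> \<nu>' t \<longleftrightarrow> t \<ge> 0 \<and> (\<forall>c. \<nu>' c - \<nu> c = t \<or> \<nu>' c = \<nu> c) \<and> (\<exists>c. \<nu>' c - \<nu> c = t)"

definition lipschitz_inf :: "('c::finite) valuation set \<Rightarrow> ('c valuation \<Rightarrow> real) \<Rightarrow> bool" where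
  "lipschitz_inf X f \<longleftrightarrow> (\<exists>K. \<forall>x \<in> X. \<forall>y \<in> X. \<bar>f x - f y\<bar> \<le> K * norm_inf (\<lambda>c. x c - y c))"

definition quasi_simple :: "('c::finite) valuation set \<Rightarrow> ('c valuation \<Rightarrow> real) \<Rightarrow> bool" where
  "quasi_simple X f \<longleftrightarrow> lipschitz_inf X f \<and>
     (\<forall>\<nu> \<in> X. \<forall>\<nu>' \<in> X. \<forall>t. succ_by \<nu> \<nu>' t \<longrightarrow> f \<nu> \<ge> f \<nu>' \<and> f \<nu> - f \<nu>' \<le> t)"

text \<open>F : \<hat>S \<rightarrow> \<real> is represented by a total function; only its values on \<hat>S matter.\<close>

definition regionally_quasi_simple :: "nat \<Rightarrow> 'l set \<Rightarrow> ('l \<Rightarrow> ('c::finite) valuation set)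
    \<Rightarrow> (('l \<times> 'c valuation) \<times> ('l \<times> 'c valuation set) \<Rightarrow> real) \<Rightarrow> bool" where
  "regionally_quasi_simple k L Inv F \<longleftrightarrow>
     (\<forall>l \<zeta>. is_region k L Inv l \<zeta> \<longrightarrow>
        quasi_simple (closure \<zeta>) (\<lambda>\<nu>. F ((l, \<nu>), (l, \<zeta>))))"

definition F_oplus :: "nat \<Rightarrow> 'l set \<Rightarrow> ('l \<Rightarrow> 'a \<Rightarrow> ('c set \<times> 'l) pmf)
    \<Rightarrow> (('l \<times> 'c valuation) \<times> ('l \<times> 'c valuation set) \<Rightarrow> real)
    \<Rightarrow> 'l \<Rightarrow> 'c valuation \<Rightarrow> 'c valuation set \<Rightarrow> 'a \<Rightarrow> real \<Rightarrow> real" where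
  "F_oplus k L \<delta> F l \<nu> \<zeta> a t =
     t + (\<Sum>(C, l') \<in> Pow UNIV \<times> L.
            pmf (\<delta> l a) (C, l') * F ((l', reset (delay \<nu> t) C), (l', reset_region k \<zeta> C)))"

end

theory Submission imports Defs begin

text \<open>Delaying \<open>\<nu>\<close> by \<open>t\<close> and then resetting \<open>C\<close> moves all non-reset clocks by the same
  amount, so along the curve \<open>t \<mapsto> (\<nu> + t)[C:=0]\<close> the successor \<open>t'\<close> of \<open>t\<close> satisfies
  \<open>(\<nu> + t)[C:=0] \<unlhd> (\<nu> + t')[C:=0]\<close> with difference \<open>t' - t\<close>, and the sup-distance of the
  two valuations is at most \<open>|t' - t|\<close>. All these valuations lie in the closure of the
  region \<open>\<zeta>[C:=0]\<close>, because resets of valuations in one region stay in one region.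
  Hence quasi-simplicity of \<open>F\<close> on that closure makes each summand Lipschitz in \<open>t\<close> and
  decreasing at slope at most 1; since the weights are probabilities, adding \<open>t\<close> gives a
  continuous nondecreasing function.\<close>

lemma cmp_sem_uminus_cong:
  assumes "(u::real) \<ge> 0" "v \<ge> 0" "\<And>r. cmp_sem r u 0 = cmp_sem r v 0"
  shows "cmp_sem r (-u) (real i) = cmp_sem r (-v) (real i)"
proof (cases "i = 0")
  case True
  then show ?thesis using assms(3)[of Lt] assms(3)[of Eq] assms(3)[of Gt]
    by (cases r) auto
next
  case False
  then show ?thesis using assms(1,2) by (cases r) auto
qed

lemma sat_reset_eq:
  assumes "x \<in> Vals k" "y \<in> Vals k" "\<forall>\<psi> \<in> constrs k. sat x \<psi> = sat y \<psi>"
    and "\<phi> \<in> constrs k"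
  shows "sat (reset x C) \<phi> = sat (reset y C) \<phi>"
proof (cases \<phi>)
  case (Single c r i)
  then show ?thesis using assms(3,4) by (auto simp: reset_def)
next
  case (Diff c c' r i)
  have single: "Single d r' j \<in> constrs k" if "j \<le> k" for d r' j
    using that by (simp add: constrs_def)
  have "i \<le> k" using assms(4) Diff by (simp add: constrs_def)
  moreover have "cmp_sem r (- x c') (real i) = cmp_sem r (- y c') (real i)"
    using assms(1,2) assms(3)[rule_format, OF single[of 0 c']]
    by (intro cmp_sem_uminus_cong) (auto simp: Vals_def)
  ultimately show ?thesis
    using Diff assms(3)[rule_format, OF single[of i c r]] assms(3)[rule_format, OF assms(4)]
    by (auto simp: reset_def)
qed

lemma reset_mem_region_of:
  assumes "clock_region k \<zeta>" "x \<in> \<zeta>" "y \<in> \<zeta>"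
  shows "reset x C \<in> region_of k (reset y C)"
proof -
  obtain w where w: "\<zeta> = region_of k w" using assms(1) unfolding clock_region_def by blast
  have V: "x \<in> Vals k" "y \<in> Vals k" and eq: "\<forall>\<psi> \<in> constrs k. sat x \<psi> = sat y \<psi>"
    using assms(2,3) unfolding w region_of_def by auto
  have "reset x C \<in> Vals k" using V(1) unfolding Vals_def reset_def by auto
  then show ?thesis
    using sat_reset_eq[OF V eq] unfolding region_of_def by auto
qed

lemma reset_mem_closure_reset_region:
  assumes "clock_region k \<zeta>" "x \<in> \<zeta>"
  shows "reset x C \<in> closure (reset_region k \<zeta> C)"
proof -
  from assms(2) have "(SOME y. y \<in> \<zeta>) \<in> \<zeta>" by (rule someI[where P="\<lambda>y. y \<in> \<zeta>"])
  from reset_mem_region_of[OF assms this] show ?thesis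
    unfolding reset_region_def using closure_subset by blast
qed

lemma norm_inf_nonneg: "0 \<le> norm_inf (x :: ('c::finite) valuation)"
proof -
  obtain c :: 'c where True by simp
  have "\<bar>x c\<bar> \<le> norm_inf x" unfolding norm_inf_def by (intro Max_ge) auto
  then show ?thesis by linarith
qed

lemma norm_inf_le:
  fixes x :: "('c::finite) valuation"
  assumes "\<And>c. \<bar>x c\<bar> \<le> B"
  shows "norm_inf x \<le> B"
  unfolding norm_inf_def using assms by (subst Max_le_iff) auto

lemma norm_inf_reset_delay_diff:
  "norm_inf (\<lambda>c. reset (delay x s) C c - reset (delay x t) C c) \<le> \<bar>s - t\<bar>"
  for x :: "('c::finite) valuation"
  by (rule norm_inf_le) (simp add: reset_def delay_def)

lemma succ_by_reset_delay:
  assumes "s \<le> t" "C \<noteq> UNIV"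
  shows "succ_by (reset (delay x s) C) (reset (delay x t) C) (t - s)"
proof -
  obtain c0 where "c0 \<notin> C" using assms(2) by auto
  then show ?thesis
    using assms(1) unfolding succ_by_def by (auto simp: reset_def delay_def)
qed

lemma continuous_on_lipschitz_inf_comp:
  fixes f :: "('c::finite) valuation \<Rightarrow> real"
  assumes "lipschitz_inf X f" "\<And>t. t \<in> I \<Longrightarrow> g t \<in> X"
    and "\<And>s t. s \<in> I \<Longrightarrow> t \<in> I \<Longrightarrow> norm_inf (\<lambda>c. g s c - g t c) \<le> \<bar>s - t\<bar>"
  shows "continuous_on I (\<lambda>t. f (g t))"
proof -
  obtain K where K: "\<forall>x \<in> X. \<forall>y \<in> X. \<bar>f x - f y\<bar> \<le> K * norm_inf (\<lambda>c. x c - y c)"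
    using assms(1) unfolding lipschitz_inf_def by blast
  have "\<bar>K\<bar>-lipschitz_on I (\<lambda>t. f (g t))"
  proof (rule lipschitz_onI)
    fix s t assume st: "s \<in> I" "t \<in> I"
    have "\<bar>f (g s) - f (g t)\<bar> \<le> K * norm_inf (\<lambda>c. g s c - g t c)"
      using K assms(2) st by blast
    also have "\<dots> \<le> \<bar>K\<bar> * norm_inf (\<lambda>c. g s c - g t c)"
      by (intro mult_right_mono norm_inf_nonneg) simp
    also have "\<dots> \<le> \<bar>K\<bar> * \<bar>s - t\<bar>"
      by (intro mult_left_mono assms(3) st) simp
    finally show "dist (f (g s)) (f (g t)) \<le> \<bar>K\<bar> * dist s t" by (simp add: dist_real_def)
  qed simp
  then show ?thesis by (rule lipschitz_on_continuous_on)
qed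

lemma quasi_simple_reset_delay_decrease:
  assumes "quasi_simple X f" "s \<le> t"
    and "reset (delay x s) C \<in> X" "reset (delay x t) C \<in> X"
  shows "f (reset (delay x s) C) - f (reset (delay x t) C) \<le> t - s"
proof (cases "C = UNIV")
  case True
  then have "reset (delay x s) C = reset (delay x t) C" by (auto simp: reset_def)
  then show ?thesis using assms(2) by simp
next
  case False
  then show ?thesis
    using assms unfolding quasi_simple_def by (blast intro: succ_by_reset_delay)
qed

lemma mono_on_add_subprob_sum:
  fixes w :: "'p \<Rightarrow> real" and g :: "'p \<Rightarrow> real \<Rightarrow> real"
  assumes "finite S" "\<And>p. 0 \<le> w p" "(\<Sum>p\<in>S. w p) \<le> 1"
    and "\<And>p s t. p \<in> S \<Longrightarrow> w p \<noteq> 0 \<Longrightarrow> s \<in> I \<Longrightarrow> t \<in> I \<Longrightarrow> s \<le> t \<Longrightarrow> g p s - g p t \<le> t - s"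
  shows "mono_on I (\<lambda>t. t + (\<Sum>p\<in>S. w p * g p t))"
proof (rule mono_onI)
  fix s t assume st: "s \<in> I" "t \<in> I" "s \<le> t"
  have summand: "w p * g p s - w p * g p t \<le> w p * (t - s)" if "p \<in> S" for p
  proof (cases "w p = 0")
    case False
    then show ?thesis using assms(2)[of p] assms(4)[OF that False st]
      by (metis mult_left_mono right_diff_distrib)
  qed simp
  have "(\<Sum>p\<in>S. w p * g p s) - (\<Sum>p\<in>S. w p * g p t) = (\<Sum>p\<in>S. w p * g p s - w p * g p t)"
    by (simp add: sum_subtractf)
  also have "\<dots> \<le> (\<Sum>p\<in>S. w p * (t - s))" by (intro sum_mono summand)
  also have "\<dots> = (\<Sum>p\<in>S. w p) * (t - s)" by (simp add: sum_distrib_right)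
  also have "\<dots> \<le> t - s"
    using assms(2,3) st(3) by (intro mult_left_le_one_le) (auto intro: sum_nonneg)
  finally show "s + (\<Sum>p\<in>S. w p * g p s) \<le> t + (\<Sum>p\<in>S. w p * g p t)" by simp
qed

lemma sum_pmf_le_1: "finite S \<Longrightarrow> (\<Sum>p\<in>S. pmf M p) \<le> 1"
  by (metis measure_measure_pmf_finite measure_pmf.prob_le_1)

theorem lemma3:
  fixes k :: nat
    and L LF :: "'l set" and Inv :: "'l \<Rightarrow> ('c::finite) valuation set" and Act :: "'a set"
    and E :: "'l \<Rightarrow> 'a \<Rightarrow> 'c valuation set" and \<delta> :: "'l \<Rightarrow> 'a \<Rightarrow> ('c set \<times> 'l) pmf"
    and F :: "('l \<times> 'c valuation) \<times> ('l \<times> 'c valuation set) \<Rightarrow> real"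
    and l :: 'l and \<nu> :: "'c valuation" and \<zeta> :: "'c valuation set" and a :: 'a
  assumes "pta k L LF Inv Act E \<delta>"
    and "(l, \<nu>) \<in> states L Inv"
    and "is_region k L Inv l \<zeta>"
    and "reaches (l, region_of k \<nu>) (l, \<zeta>)"
    and "a \<in> Act"
    and "regionally_quasi_simple k L Inv F"
    and "\<forall>C l'. (C, l') \<in> set_pmf (\<delta> l a) \<longrightarrow> is_region k L Inv l' (reset_region k \<zeta> C)"
  shows "continuous_on {t. t \<ge> 0 \<and> delay \<nu> t \<in> \<zeta>} (F_oplus k L \<delta> F l \<nu> \<zeta> a)
       \<and> mono_on {t. t \<ge> 0 \<and> delay \<nu> t \<in> \<zeta>} (F_oplus k L \<delta> F l \<nu> \<zeta> a)"
proof -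
  define I where "I = {t. t \<ge> 0 \<and> delay \<nu> t \<in> \<zeta>}"
  define S where "S = Pow (UNIV::'c set) \<times> L"
  define f where "f = (\<lambda>p x. F ((snd p, x), (snd p, reset_region k \<zeta> (fst p))))"
  define X where "X = (\<lambda>p :: 'c set \<times> 'l. closure (reset_region k \<zeta> (fst p)))"
  define g where "g = (\<lambda>(p :: 'c set \<times> 'l) t. reset (delay \<nu> t) (fst p))"
  have "finite S" using assms(1) unfolding S_def pta_def by auto
  have F_oplus_eq: "F_oplus k L \<delta> F l \<nu> \<zeta> a = (\<lambda>t. t + (\<Sum>p\<in>S. pmf (\<delta> l a) p * f p (g p t)))"
    unfolding F_oplus_def S_def f_def g_def by (auto simp: case_prod_beta)
  have g_mem: "g p t \<in> X p" if "t \<in> I" for p t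
    using that assms(3) reset_mem_closure_reset_region
    unfolding I_def X_def g_def is_region_def by blast
  have qs: "quasi_simple (X p) (f p)" if "pmf (\<delta> l a) p \<noteq> 0" for p
    using assms(6,7) that unfolding regionally_quasi_simple_def X_def f_def
    by (metis prod.collapse set_pmf_iff)
  have summand_cont: "continuous_on I (\<lambda>t. pmf (\<delta> l a) p * f p (g p t))" for p
  proof (cases "pmf (\<delta> l a) p = 0")
    case False
    have "continuous_on I (\<lambda>t. f p (g p t))"
    proof (rule continuous_on_lipschitz_inf_comp[where X="X p" and g="g p"])
      show "lipschitz_inf (X p) (f p)" using qs[OF False] unfolding quasi_simple_def by blast
    qed (use g_mem in \<open>auto simp: g_def norm_inf_reset_delay_diff\<close>)
    then show ?thesis by (rule continuous_on_mult_left)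
  qed simp
  have "continuous_on I (F_oplus k L \<delta> F l \<nu> \<zeta> a)"
    unfolding F_oplus_eq by (intro continuous_on_add continuous_on_id continuous_on_sum summand_cont)
  moreover have "mono_on I (F_oplus k L \<delta> F l \<nu> \<zeta> a)"
    unfolding F_oplus_eq
  proof (rule mono_on_add_subprob_sum)
    show "(\<Sum>p\<in>S. pmf (\<delta> l a) p) \<le> 1" using \<open>finite S\<close> by (rule sum_pmf_le_1)
    fix p s t assume "pmf (\<delta> l a) p \<noteq> 0" "s \<in> I" "t \<in> I" "s \<le> t"
    then show "f p (g p s) - f p (g p t) \<le> t - s"
      using quasi_simple_reset_delay_decrease[OF qs] g_mem unfolding g_def by blast
  qed (simp_all add: \<open>finite S\<close>)
  ultimately show ?thesis unfolding I_def by simp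
qed

end
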